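(* Let $S,M\subseteq X$ be disjoint, let $T\ge2$ be an even integer, and let $y=(y_0,y_1,\dots)$ be an infinite sequence in $X$ such that $y_0\in S$, $\mathrm{ct}\le T$, and $S_y[0,\mathrm{ht}]=1$. Set $r_S=T/2$. Then there exists $r_M\in R=\{1,2,4,\dots,2^{\lceil\log_2(14T)\rceil}\}$ such that, for $r=(r_S,r_M)$, \[ M_y^{(r)}[0,2T]\ge T/2\qquad\text{and}\qquad S_y^{(r)}[7T,15T]\ge T/4. \]
   Context: For a sequence $y$: $\mathrm{ht}=\min\{i\ge0:y_i\in M\}$ and $\mathrm{ct}=\min\{i>\mathrm{ht}:y_i\in S\}$. For positive integers $r=(r_S,r_M)$, $\gamma^{(r)}$ is the sequence obtained from $y$ by replacing each entry lying in $S$ by $r_S$ consecutive copies of it and each entry lying in $M$ by $r_M$ consecutive copies (other entries unchanged), indexed from $0$. For integers $a<b$, $M_y^{(r)}[a,b]=|\{t\in\{a,\dots,b\}:\gamma^{(r)}_t\in M\}|$ and $S_y^{(r)}[a,b]=|\{t\in\{a,\dots,b\}:\gamma^{(r)}_t\in S\}|$; when $r=(1,1)$ the superscript is omitted (so $\gamma^{(1,1)}=y$). *)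

theory Defs
  imports Complex_Main
begin

definition ht :: "(nat \<Rightarrow> 'a) \<Rightarrow> 'a set \<Rightarrow> nat" where
  "ht y M = (LEAST i. y i \<in> M)"

definition ct :: "(nat \<Rightarrow> 'a) \<Rightarrow> 'a set \<Rightarrow> 'a set \<Rightarrow> nat" where
  "ct y S M = (LEAST i. ht y M < i \<and> y i \<in> S)"

text \<open>Block length of entry j in the stretched sequence.\<close>
definition blen :: "(nat \<Rightarrow> 'a) \<Rightarrow> 'a set \<Rightarrow> 'a set \<Rightarrow> nat \<Rightarrow> nat \<Rightarrow> nat \<Rightarrow> nat" where
  "blen y S M rS rM j = (if y j \<in> S then rS else if y j \<in> M then rM else 1)"

definition bstart :: "(nat \<Rightarrow> 'a) \<Rightarrow> 'a set \<Rightarrow> 'a set \<Rightarrow> nat \<Rightarrow> nat \<Rightarrow> nat \<Rightarrow> nat" where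
  "bstart y S M rS rM j = (\<Sum>i<j. blen y S M rS rM i)"

text \<open>gamma^(r)_t: the entry of y whose block contains position t.\<close>
definition gamma :: "(nat \<Rightarrow> 'a) \<Rightarrow> 'a set \<Rightarrow> 'a set \<Rightarrow> nat \<Rightarrow> nat \<Rightarrow> nat \<Rightarrow> 'a" where
  "gamma y S M rS rM t = y (LEAST j. t < bstart y S M rS rM (Suc j))"

definition Mcount :: "(nat \<Rightarrow> 'a) \<Rightarrow> 'a set \<Rightarrow> 'a set \<Rightarrow> nat \<Rightarrow> nat \<Rightarrow> nat \<Rightarrow> nat \<Rightarrow> nat" where
  "Mcount y S M rS rM a b = card {t \<in> {a..b}. gamma y S M rS rM t \<in> M}"

definition Scount :: "(nat \<Rightarrow> 'a) \<Rightarrow> 'a set \<Rightarrow> 'a set \<Rightarrow> nat \<Rightarrow> nat \<Rightarrow> nat \<Rightarrow> nat \<Rightarrow> nat" where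
  "Scount y S M rS rM a b = card {t \<in> {a..b}. gamma y S M rS rM t \<in> S}"

end

theory Submission
  imports Defs
begin

text \<open>Stretching the prefix before \<open>ct\<close> by \<open>r\<^sub>M\<close> changes its length to \<open>c\<^sub>0 + m r\<^sub>M\<close>, where
  \<open>m \<ge> 1\<close> counts the \<open>M\<close>-entries there and \<open>c\<^sub>0 \<le> T/2 + ct - 2\<close> is the length taken by the other
  entries (only \<open>y\<^sub>0\<close> lies in \<open>S\<close>). Doubling \<open>r\<^sub>M\<close> at most doubles \<open>m r\<^sub>M\<close>, so some power of two puts
  this length in \<open>[7T, 14T)\<close>. Then the block of \<open>y\<^sub>c\<^sub>t \<in> S\<close>, of length \<open>T/2\<close>, lies in \<open>[7T, 15T]\<close>,
  and all of \<open>[0, 2T]\<close> lies in the prefix, where at most \<open>c\<^sub>0 \<le> 3T/2 - 2\<close> positions are not in \<open>M\<close>.\<close>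

lemma bstart_Suc: "bstart y S M rS rM (Suc j) = bstart y S M rS rM j + blen y S M rS rM j"
  by (simp add: bstart_def)

lemma bstart_mono: "i \<le> j \<Longrightarrow> bstart y S M rS rM i \<le> bstart y S M rS rM j"
  unfolding bstart_def by (rule sum_mono2) auto

lemma gamma_block:
  assumes "bstart y S M rS rM j \<le> t" "t < bstart y S M rS rM (Suc j)"
  shows "gamma y S M rS rM t = y j"
proof -
  have "(LEAST j'. t < bstart y S M rS rM (Suc j')) = j"
  proof (rule Least_equality)
    fix j' assume "t < bstart y S M rS rM (Suc j')"
    with assms(1) show "j \<le> j'"
      using bstart_mono[of "Suc j'" j y S M rS rM] by (meson leD not_less_eq_eq order_trans)
  qed (fact assms(2))
  thus ?thesis by (simp add: gamma_def)
qed

lemma gamma_unstretched: "gamma y S M 1 1 t = y t"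
proof -
  have "blen y S M 1 1 j = 1" for j
    by (simp add: blen_def)
  hence "bstart y S M 1 1 j = j" for j
    by (simp add: bstart_def)
  thus ?thesis by (simp add: gamma_block)
qed

lemma card_below_bstart:
  "card {t \<in> {..<bstart y S M rS rM b}. P (gamma y S M rS rM t)}
     = (\<Sum>j<b. if P (y j) then blen y S M rS rM j else 0)"
proof (induction b)
  case 0
  then show ?case by (simp add: bstart_def)
next
  case (Suc b)
  let ?B = "bstart y S M rS rM"
  let ?A = "{t \<in> {..<?B b}. P (gamma y S M rS rM t)}"
  let ?C = "{t \<in> {?B b..<?B (Suc b)}. P (gamma y S M rS rM t)}"
  have "{t \<in> {..<?B (Suc b)}. P (gamma y S M rS rM t)} = ?A \<union> ?C"
    using bstart_mono[of b "Suc b" y S M rS rM] by auto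
  moreover have "card (?A \<union> ?C) = card ?A + card ?C"
    by (rule card_Un_disjoint) auto
  moreover have "?C = (if P (y b) then {?B b..<?B (Suc b)} else {})"
    using gamma_block[of y S M rS rM b] by auto
  ultimately show ?case using Suc by (simp add: bstart_Suc)
qed

lemma Scount_ge_blen:
  assumes "y j \<in> S" "a \<le> bstart y S M rS rM j" "bstart y S M rS rM (Suc j) \<le> Suc b"
  shows "blen y S M rS rM j \<le> Scount y S M rS rM a b"
proof -
  have "{bstart y S M rS rM j..<bstart y S M rS rM (Suc j)}
          \<subseteq> {t \<in> {a..b}. gamma y S M rS rM t \<in> S}"
    using assms by (auto simp: gamma_block)
  from card_mono[OF _ this] show ?thesis
    unfolding Scount_def by (simp add: bstart_Suc)
qed

text \<open>The length of the stretched prefix \<open>y\<^sub>0 \<dots> y\<^sub>c\<^sub>-\<^sub>1\<close> taken by entries outside \<open>M\<close>; it does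
  not depend on \<open>r\<^sub>M\<close>.\<close>
definition nonM_span :: "(nat \<Rightarrow> 'a) \<Rightarrow> 'a set \<Rightarrow> 'a set \<Rightarrow> nat \<Rightarrow> nat \<Rightarrow> nat" where
  "nonM_span y S M rS c = (\<Sum>j<c. if y j \<in> M then 0 else blen y S M rS 1 j)"

lemma nonM_span_eq: "(\<Sum>j<c. if y j \<notin> M then blen y S M rS rM j else 0) = nonM_span y S M rS c"
  unfolding nonM_span_def by (intro sum.cong) (auto simp: blen_def)

lemma bstart_eq_nonM_span:
  assumes "S \<inter> M = {}"
  shows "bstart y S M rS rM c = nonM_span y S M rS c + card {j \<in> {..<c}. y j \<in> M} * rM"
proof -
  have "bstart y S M rS rM c
          = (\<Sum>j<c. (if y j \<notin> M then blen y S M rS rM j else 0) + (if y j \<in> M then rM else 0))"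
    unfolding bstart_def using assms by (intro sum.cong) (auto simp: blen_def)
  also have "\<dots> = nonM_span y S M rS c + (\<Sum>j<c. if y j \<in> M then rM else 0)"
    by (simp add: sum.distrib nonM_span_eq)
  also have "(\<Sum>j<c. if y j \<in> M then rM else 0) = card {j \<in> {..<c}. y j \<in> M} * rM"
    by (subst sum.inter_filter[symmetric]) auto
  finally show ?thesis .
qed

lemma Mcount_prefix_ge:
  assumes "Suc b \<le> bstart y S M rS rM c"
  shows "Suc b \<le> Mcount y S M rS rM 0 b + nonM_span y S M rS c"
proof -
  let ?g = "gamma y S M rS rM"
  let ?N = "{t \<in> {0..b}. ?g t \<notin> M}"
  have "{t \<in> {0..b}. ?g t \<in> M} \<union> ?N = {0..b}"
    by auto
  moreover have "card ({t \<in> {0..b}. ?g t \<in> M} \<union> ?N) = card {t \<in> {0..b}. ?g t \<in> M} + card ?N"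
    by (rule card_Un_disjoint) auto
  ultimately have "card {t \<in> {0..b}. ?g t \<in> M} + card ?N = Suc b"
    by simp
  moreover have "card ?N \<le> card {t \<in> {..<bstart y S M rS rM c}. ?g t \<notin> M}"
    using assms by (intro card_mono) auto
  ultimately show ?thesis
    unfolding Mcount_def card_below_bstart[where P = "\<lambda>x. x \<notin> M"] nonM_span_eq by linarith
qed

lemma exists_power_of_two_window:
  fixes c m L :: nat
  assumes "0 < m" "c + m < 2 * L"
  shows "\<exists>k. L \<le> c + m * 2 ^ k \<and> c + m * 2 ^ k < 2 * L"
proof -
  have "2 ^ L \<le> m * 2 ^ L"
    using assms(1) by simp
  then have large: "L \<le> c + m * 2 ^ L"
    using less_exp[of L] by linarith
  define k where "k = (LEAST i. L \<le> c + m * 2 ^ i)"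
  from LeastI[of "\<lambda>i. L \<le> c + m * 2 ^ i", OF large] have k: "L \<le> c + m * 2 ^ k"
    unfolding k_def .
  have "c + m * 2 ^ k < 2 * L"
  proof (cases k)
    case (Suc i)
    then have "c + m * 2 ^ i < L"
      using not_less_Least[of i "\<lambda>i. L \<le> c + m * 2 ^ i"] k_def by fastforce
    with Suc show ?thesis by simp
  qed (use assms(2) in simp)
  with k show ?thesis by blast
qed

lemma le_ceiling_log2:
  assumes "2 ^ k \<le> n"
  shows "int k \<le> \<lceil>log 2 (real n)\<rceil>"
proof -
  have "2 powr real k \<le> real n"
    using assms by (simp add: powr_realpow flip: of_nat_le_iff)
  hence "real k \<le> log 2 (real n)"
    using assms by (subst le_log_iff) (auto intro: order.strict_trans2[of 0 "2 ^ k"])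
  thus ?thesis by linarith
qed

lemma ht_ct_props:
  assumes "\<exists>i. y i \<in> M" "\<exists>i. ht y M < i \<and> y i \<in> S"
  shows "y (ht y M) \<in> M" "ht y M < ct y S M" "y (ct y S M) \<in> S"
    and "\<And>i. ht y M < i \<Longrightarrow> i < ct y S M \<Longrightarrow> y i \<notin> S"
  using LeastI_ex[OF assms(1)] LeastI_ex[OF assms(2)] not_less_Least[of _ "\<lambda>i. ht y M < i \<and> y i \<in> S"]
  unfolding ht_def ct_def by blast+

lemma not_in_S_if_Scount_one:
  assumes "Scount y S M 1 1 0 h = 1" "y 0 \<in> S" "0 < j" "j \<le> h"
  shows "y j \<notin> S"
proof
  assume "y j \<in> S"
  then have "{0, j} \<subseteq> {t \<in> {0..h}. gamma y S M 1 1 t \<in> S}"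
    using assms gamma_unstretched[of y S M] by auto
  from card_mono[OF _ this] assms show False
    unfolding Scount_def by simp
qed

lemma nonM_span_le:
  assumes "y 0 \<in> S" "0 < h" "h < c" "y h \<in> M" "\<And>j. 0 < j \<Longrightarrow> j < c \<Longrightarrow> y j \<notin> S"
  shows "nonM_span y S M rS c \<le> rS + (c - 2)"
proof -
  let ?f = "\<lambda>j. if y j \<in> M then 0 else blen y S M rS 1 j"
  have "{..<c} = insert 0 {1..<c}"
    using assms(3) by auto
  hence "nonM_span y S M rS c = ?f 0 + sum ?f {1..<c}"
    unfolding nonM_span_def by simp
  also have "sum ?f {1..<c} = ?f h + sum ?f ({1..<c} - {h})"
    using assms(2,3) by (intro sum.remove) auto
  also have "?f 0 \<le> rS"
    using assms(1) by (simp add: blen_def)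
  also have "?f h = 0"
    using assms(4) by simp
  also have "sum ?f ({1..<c} - {h}) \<le> card ({1..<c} - {h})"
    using sum_bounded_above[of "{1..<c} - {h}" ?f 1] assms(5) by (auto simp: blen_def)
  also have "card ({1..<c} - {h}) = c - 2"
    using assms(2,3) by simp
  finally show ?thesis
    by simp
qed

lemma prefix_before_ct_counts:
  assumes "S \<inter> M = {}" "y 0 \<in> S" "\<exists>i. y i \<in> M" "\<exists>i. ht y M < i \<and> y i \<in> S"
    and "Scount y S M 1 1 0 (ht y M) = 1"
  shows "nonM_span y S M rS (ct y S M) \<le> rS + (ct y S M - 2)"
    and "0 < card {j \<in> {..<ct y S M}. y j \<in> M}" "card {j \<in> {..<ct y S M}. y j \<in> M} \<le> ct y S M"
proof -
  let ?h = "ht y M" and ?c = "ct y S M"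
  note hc = ht_ct_props[OF assms(3,4)]
  have "0 < ?h"
    using hc(1) assms(1,2) by (metis disjoint_iff gr0I)
  moreover have "\<And>j. 0 < j \<Longrightarrow> j < ?c \<Longrightarrow> y j \<notin> S"
    using not_in_S_if_Scount_one[OF assms(5,2)] hc(4) by (metis not_less)
  ultimately show "nonM_span y S M rS ?c \<le> rS + (?c - 2)"
    using nonM_span_le[OF assms(2) _ hc(2) hc(1)] by blast
  have "?h \<in> {j \<in> {..<?c}. y j \<in> M}"
    using hc(1,2) by simp
  then show "0 < card {j \<in> {..<?c}. y j \<in> M}"
    by (auto simp: card_gt_0_iff)
  show "card {j \<in> {..<?c}. y j \<in> M} \<le> ?c"
    using card_mono[of "{..<?c}" "{j \<in> {..<?c}. y j \<in> M}"] by auto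
qed

theorem mainTheorem9:
  fixes S M :: "'a set" and y :: "nat \<Rightarrow> 'a" and T :: nat
  assumes "S \<inter> M = {}"
    and "T \<ge> 2" and "even T"
    and "y 0 \<in> S"
    and "\<exists>i. y i \<in> M"
    and "\<exists>i. ht y M < i \<and> y i \<in> S"
    and "ct y S M \<le> T"
    and "Scount y S M 1 1 0 (ht y M) = 1"
  shows "\<exists>rM \<in> {2 ^ k | k :: nat. int k \<le> \<lceil>log 2 (14 * real T)\<rceil>}.
           real (Mcount y S M (T div 2) rM 0 (2 * T)) \<ge> real T / 2 \<and>
           real (Scount y S M (T div 2) rM (7 * T) (15 * T)) \<ge> real T / 4"
proof -
  let ?c = "ct y S M" and ?rS = "T div 2"
  define c0 where "c0 = nonM_span y S M ?rS ?c"
  define m where "m = card {j \<in> {..<?c}. y j \<in> M}"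
  note counts = prefix_before_ct_counts[OF assms(1,4,5,6,8)]
  have c0_le: "c0 \<le> ?rS + (?c - 2)"
    unfolding c0_def by (rule counts(1))
  have m: "0 < m" "m \<le> ?c"
    unfolding m_def using counts(2,3) by auto
  have "c0 + m < 2 * (7 * T)"
    using c0_le m(2) assms(2,7) div_le_dividend[of T 2] by linarith
  then obtain k where k: "7 * T \<le> c0 + m * 2 ^ k" "c0 + m * 2 ^ k < 2 * (7 * T)"
    using exists_power_of_two_window[OF m(1)] by blast
  have "2 ^ k \<le> m * 2 ^ k"
    using m(1) by simp
  with k(2) have "2 ^ k \<le> 14 * T"
    by linarith
  then have log: "int k \<le> \<lceil>log 2 (14 * real T)\<rceil>"
    using le_ceiling_log2[of k "14 * T"] by simp
  have P: "bstart y S M ?rS (2 ^ k) ?c = c0 + m * 2 ^ k"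
    unfolding m_def c0_def by (rule bstart_eq_nonM_span[OF assms(1)])
  have S_count: "?rS \<le> Scount y S M ?rS (2 ^ k) (7 * T) (15 * T)"
    using Scount_ge_blen[of y ?c S "7 * T" M ?rS "2 ^ k" "15 * T"] ht_ct_props(3)[OF assms(5,6)] P k
    by (simp add: bstart_Suc blen_def)
  have "Suc (2 * T) \<le> Mcount y S M ?rS (2 ^ k) 0 (2 * T) + c0"
    using Mcount_prefix_ge[of "2 * T" y S M ?rS "2 ^ k" ?c] P k(1) assms(2)
    unfolding c0_def by simp
  then have M_count: "?rS \<le> Mcount y S M ?rS (2 ^ k) 0 (2 * T)"
    using c0_le assms(7) by linarith
  have "real ?rS = real T / 2"
    using assms(3) by (simp add: real_of_nat_div)
  with log S_count M_count show ?thesis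
    by (intro bexI[of _ "2 ^ k"]) auto
qed

end
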